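(* Let $d\ge 1$ and $g(t)=e^{-\pi|t|^2}$, $t\in\mathbb{R}^d$. Suppose there exist $R>0$, $N>1$ and $f\in L^2(\mathbb{R}^d)$, $f\neq 0$, such that \[ |V_g f(x,\omega)|\le \frac{|\langle f,g\rangle|}{N}\quad\text{for all } x\in\mathbb{R}^d \text{ and all } \omega\in\mathbb{R}^d \text{ with } |\omega|=R. \] Then $R>\sqrt{\dfrac{\log N}{\pi}}$.
   Context: For $f,g\in L^2(\mathbb{R}^d)$, the short-time Fourier transform is $V_g f(x,\omega)=\int_{\mathbb{R}^d} e^{-2\pi i t\cdot\omega} f(t)\overline{g(t-x)}\,dt$ for $(x,\omega)\in\mathbb{R}^{2d}$, and $\langle f,g\rangle=\int_{\mathbb{R}^d} f(t)\overline{g(t)}\,dt$ is the $L^2$ inner product. $|\cdot|$ denotes the Euclidean norm and $\log$ the natural logarithm. *)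

theory Defs
  imports "HOL-Analysis.Analysis"
begin

text \<open>Functions on R^d are modelled on an arbitrary Euclidean space 'a (dimension DIM('a) >= 1).\<close>

definition square_integrable :: "('a::euclidean_space \<Rightarrow> complex) \<Rightarrow> bool" where
  "square_integrable f \<longleftrightarrow> f \<in> borel_measurable lebesgue \<and>
     integrable lebesgue (\<lambda>t. (norm (f t))\<^sup>2)"

definition gauss :: "'a::euclidean_space \<Rightarrow> complex" where
  "gauss t = complex_of_real (exp (- pi * (norm t)\<^sup>2))"

definition stft :: "('a::euclidean_space \<Rightarrow> complex) \<Rightarrow> ('a \<Rightarrow> complex) \<Rightarrow> 'a \<Rightarrow> 'a \<Rightarrow> complex" where
  "stft g f x \<omega> = (LINT t|lebesgue. exp (- (2 * pi * \<i> * complex_of_real (t \<bullet> \<omega>))) * f t * cnj (g (t - x)))"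

definition l2_inner :: "('a::euclidean_space \<Rightarrow> complex) \<Rightarrow> ('a \<Rightarrow> complex) \<Rightarrow> complex" where
  "l2_inner f g = (LINT t|lebesgue. f t * cnj (g t))"

end

theory Submission
  imports Defs "HOL-Complex_Analysis.Complex_Analysis" "HOL-Probability.Distributions" "HOL-Real_Asymp.Real_Asymp"
begin

text \<open>Let \<open>g\<close> be the Gaussian and \<open>u\<close> a unit vector. The function
  \<open>F(\<zeta>) = exp(-\<pi>\<zeta>\<^sup>2) \<integral> f(t) g(t) exp(2\<pi>\<zeta> t\<cdot>u) dt\<close> is entire, and
  \<open>|F(a + ib)| = exp(\<pi>b\<^sup>2) |V\<^sub>gf(au, -bu)|\<close>. So \<open>F\<close> is bounded on the strip \<open>|Im \<zeta>| \<le> R\<close>, and on its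
  boundary the hypothesis gives \<open>|F| \<le> exp(\<pi>R\<^sup>2) |\<langle>f,g\<rangle>| / N\<close>. If \<open>N \<ge> exp(\<pi>R\<^sup>2)\<close> this is at most
  \<open>|F(0)| = |\<langle>f,g\<rangle>|\<close>, so by a Phragmen-Lindelof argument in the strip and the maximum
  modulus principle \<open>F\<close> is constant. Taking \<open>\<zeta> = ir\<close> shows that the Fourier transform of \<open>f g\<close> is
  \<open>\<langle>f,g\<rangle>\<close> times a Gaussian, so by Fourier uniqueness \<open>f\<close> is a.e. constant, hence zero since it is
  square integrable. This contradiction gives \<open>N < exp(\<pi>R\<^sup>2)\<close>.\<close>

abbreviation gaussian :: "real \<Rightarrow> 'a::euclidean_space \<Rightarrow> real" where
  "gaussian \<alpha> t \<equiv> exp (- pi * \<alpha> * norm t ^ 2)"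

lemma norm_exp_sub_one_sub_le:
  fixes z :: complex
  shows "norm (exp z - 1 - z) \<le> norm z ^ 2 * exp (norm z)"
proof -
  have sums: "(\<lambda>k. z ^ (k + 2) /\<^sub>R fact (k + 2)) sums (exp z - (\<Sum>k<2. z ^ k /\<^sub>R fact k))"
    by (intro sums_split_initial_segment exp_converges)
  have norm_summable: "summable (\<lambda>k. norm (z ^ (k + 2) /\<^sub>R fact (k + 2)))"
    using summable_norm_exp[of z]
    by (intro summable_norm summable_ignore_initial_segment)
       (auto simp: norm_power norm_divide divide_simps)
  have "exp z - 1 - z = (\<Sum>k. z ^ (k + 2) /\<^sub>R fact (k + 2))"
    using sums by (simp add: sums_iff eval_nat_numeral)
  also have "norm \<dots> \<le> (\<Sum>k. norm (z ^ (k + 2) /\<^sub>R fact (k + 2)))"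
    using norm_summable by (rule summable_norm)
  also have "\<dots> \<le> (\<Sum>k. norm z ^ 2 * (norm z ^ k /\<^sub>R fact k))"
  proof (rule suminf_le)
    fix k :: nat
    have "norm (z ^ (k + 2) /\<^sub>R fact (k + 2)) = norm z ^ 2 * (norm z ^ k / fact (k+2))"
      unfolding norm_scaleR norm_power power_add
      by (simp add: abs_of_pos divide_inverse mult_ac norm_mult norm_power del: fact_Suc)
    also have "\<dots> \<le> norm z ^ 2 * (norm z ^ k / fact k)"
      by (intro mult_left_mono divide_left_mono fact_mono) auto
    finally show "norm (z ^ (k + 2) /\<^sub>R fact (k + 2)) \<le> norm z ^ 2 * (norm z ^ k /\<^sub>R fact k)"
      by (simp add: divide_inverse_commute)
  next
    show "summable (\<lambda>k. norm z ^ 2 * (norm z ^ k /\<^sub>R fact k))"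
      by (intro summable_mult exp_converges[THEN sums_summable])
  qed (rule norm_summable)
  also have "\<dots> = norm z ^ 2 * exp (norm z)"
    using sums_mult[OF exp_converges[of "norm z"], of "norm z ^ 2"] by (simp add: sums_iff)
  finally show ?thesis .
qed

lemma norm_exp_mult_of_real_le: "norm (exp (z * complex_of_real r)) \<le> exp (norm z * \<bar>r\<bar>)"
proof -
  have "Re (z * complex_of_real r) = Re z * r" by simp
  also have "\<dots> \<le> \<bar>Re z\<bar> * \<bar>r\<bar>" by (metis abs_ge_self abs_mult)
  also have "\<dots> \<le> norm z * \<bar>r\<bar>" by (intro mult_right_mono abs_Re_le_cmod) auto
  finally show ?thesis by (simp add: norm_exp_eq_Re)
qed

lemma norm_exp_mult_inner_le:
  "norm (exp (z * complex_of_real (t \<bullet> v))) \<le> exp (norm z * norm v * norm t)"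
proof -
  have "norm z * \<bar>t \<bullet> v\<bar> \<le> norm z * norm v * norm t"
    using mult_left_mono[OF Cauchy_Schwarz_ineq2[of t v], of "norm z"] by (simp add: mult_ac)
  then show ?thesis using norm_exp_mult_of_real_le[of z "t \<bullet> v"] by (meson exp_le_cancel_iff order_trans)
qed

lemma abs_le_exp_abs: "\<bar>x::real\<bar> \<le> exp \<bar>x\<bar>"
  using exp_ge_add_one_self[of "\<bar>x\<bar>"] by linarith

lemma power2_le_2_exp_abs: "(x::real)\<^sup>2 \<le> 2 * exp \<bar>x\<bar>"
  using exp_lower_Taylor_quadratic[of "\<bar>x\<bar>"] by (simp add: power2_abs)

lemma mult_le_sum_squares_half: "(x::real) * y \<le> (x\<^sup>2 + y\<^sup>2) / 2"
  using zero_le_power2[of "x - y"] by (simp add: power2_eq_square algebra_simps)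

lemma mult_le_square_bound:
  fixes a c r :: real assumes "c > 0"
  shows "a * r \<le> a\<^sup>2 / (4 * c) + c * r\<^sup>2"
proof -
  have "4 * c * (a * r) \<le> a\<^sup>2 + 4 * c\<^sup>2 * r\<^sup>2"
    using zero_le_power2[of "2 * c * r - a"] by (simp add: power2_eq_square algebra_simps)
  then show ?thesis
    using assms by (simp add: field_simps power2_eq_square)
qed

lemma integrable_exp_neg_square:
  fixes c :: real assumes "c > 0"
  shows "integrable lborel (\<lambda>x::real. exp (- c * x\<^sup>2))"
proof -
  define s where "s = sqrt (1 / (2 * c))"
  have s: "s > 0" "s\<^sup>2 = 1 / (2*c)" using assms by (auto simp: s_def)
  have "exp (- c * x\<^sup>2) = sqrt (2 * pi * s\<^sup>2) * normal_density 0 s x" for x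
    using s assms by (simp add: normal_density_def)
  then show ?thesis
    using integrable_mult_right[OF integrable_normal_density[OF s(1)]] by presburger
qed

lemma power2_norm_eq_sum_Basis: "norm (x::'a::euclidean_space) ^ 2 = (\<Sum>b\<in>Basis. (x \<bullet> b)\<^sup>2)"
proof -
  have "norm x ^ 2 = (\<Sum>b\<in>Basis. (x \<bullet> b) * (x \<bullet> b))"
    by (simp add: power2_norm_eq_inner euclidean_inner[of x x])
  then show ?thesis by (simp add: power2_eq_square)
qed

lemma integrable_exp_neg_norm_square:
  fixes c :: real assumes "c > 0"
  shows "integrable lborel (\<lambda>x::'a::euclidean_space. exp (- c * norm x ^ 2))"
proof (rule integrableI_bounded)
  show "(\<lambda>x::'a. exp (- c * norm x ^ 2)) \<in> borel_measurable lborel" by measurable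
  have product: "exp (- c * norm x ^ 2) = (\<Prod>b\<in>Basis. exp (- c * (x \<bullet> b)\<^sup>2))" for x :: 'a
    by (simp add: power2_norm_eq_sum_Basis sum_distrib_left exp_sum[symmetric] sum_negf)
  have one_dim: "(\<integral>\<^sup>+t. ennreal (exp (- c * t\<^sup>2)) \<partial>lborel) \<noteq> \<infinity>"
    using integrable_exp_neg_square[OF assms] by (simp add: integrable_iff_bounded)
  have "(\<integral>\<^sup>+x. ennreal (norm (exp (- c * norm (x::'a) ^ 2))) \<partial>lborel)
      = (\<integral>\<^sup>+x. (\<Prod>b\<in>(Basis::'a set). ennreal (exp (- c * (x \<bullet> b)\<^sup>2))) \<partial>lborel)"
    by (intro nn_integral_cong) (subst product, auto simp: prod_ennreal abs_prod)
  also have "\<dots> = (\<Prod>b\<in>(Basis::'a set). (\<integral>\<^sup>+t. ennreal (exp (- c * t\<^sup>2)) \<partial>lborel))"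
    by (rule nn_integral_lborel_prod) auto
  also have "\<dots> < \<infinity>"
    using one_dim by (simp add: power_less_top_ennreal top.not_eq_extremum)
  finally show "(\<integral>\<^sup>+x. ennreal (norm (exp (- c * norm (x::'a) ^ 2))) \<partial>lborel) < \<infinity>" .
qed

lemma integrable_gaussian:
  assumes "\<alpha> > 0"
  shows "integrable lborel (gaussian \<alpha> :: 'a::euclidean_space \<Rightarrow> real)"
  using integrable_exp_neg_norm_square[of "pi * \<alpha>", where 'a='a] assms by (simp add: mult.assoc)

lemma integral_gaussian_pos:
  assumes "\<alpha> > 0"
  shows "(LINT t|lborel. gaussian \<alpha> (t::'a::euclidean_space)) > 0"
proof -
  have "(LINT t|lborel. gaussian \<alpha> (t::'a)) \<noteq> 0"
  proof
    assume "(LINT t|lborel. gaussian \<alpha> (t::'a)) = 0"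
    then have "AE t in lborel. gaussian \<alpha> (t::'a) = 0"
      using integral_nonneg_eq_0_iff_AE[OF integrable_gaussian[OF assms]] by auto
    then show False using ae_filter_eq_bot_iff[of "lborel::'a measure"] by (simp add: eventually_False)
  qed
  moreover have "(LINT t|lborel. gaussian \<alpha> (t::'a)) \<ge> 0" by (intro integral_nonneg_AE) auto
  ultimately show ?thesis by linarith
qed

lemma integral_lborel_translate:
  fixes g :: "'a::euclidean_space \<Rightarrow> 'b::{banach, second_countable_topology}"
  assumes [measurable]: "g \<in> borel_measurable borel"
  shows "(LINT x|lborel. g (c + x)) = integral\<^sup>L lborel g"
  using integral_distr[of "(+) c" lborel borel g] by (simp add: lborel_distr_plus)

lemma integrable_lborel_translate_iff:
  fixes g :: "'a::euclidean_space \<Rightarrow> 'b::{banach, second_countable_topology}"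
  assumes [measurable]: "g \<in> borel_measurable borel"
  shows "integrable lborel (\<lambda>x. g (c + x)) \<longleftrightarrow> integrable lborel g"
  using integrable_distr_eq[of "(+) c" lborel borel g] by (simp add: lborel_distr_plus)

lemma integral_lborel_affine:
  fixes g :: "'a::euclidean_space \<Rightarrow> 'b::{banach, second_countable_topology}"
  assumes [measurable]: "g \<in> borel_measurable borel" and "c \<noteq> 0"
  shows "integral\<^sup>L lborel g = (\<bar>c\<bar>^DIM('a)) *\<^sub>R (LINT x|lborel. g (t + c *\<^sub>R x))"
proof -
  have "integral\<^sup>L lborel g = integral\<^sup>L (density (distr lborel borel (\<lambda>x::'a. t + c *\<^sub>R x)) (\<lambda>_. ennreal (\<bar>c\<bar>^DIM('a)))) g"
    using lborel_affine[OF \<open>c \<noteq> 0\<close>, of t] by simp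
  also have "\<dots> = integral\<^sup>L (distr lborel borel (\<lambda>x::'a. t + c *\<^sub>R x)) (\<lambda>x. (\<bar>c\<bar>^DIM('a)) *\<^sub>R g x)"
    by (rule integral_density) auto
  also have "\<dots> = (\<bar>c\<bar>^DIM('a)) *\<^sub>R (LINT x|lborel. g (t + c *\<^sub>R x))"
    by (subst integral_distr) auto
  finally show ?thesis .
qed

lemma integrable_lborel_const_imp_zero:
  assumes "integrable lborel (\<lambda>_::'a::euclidean_space. (r::real))"
  shows "r = 0"
proof (rule ccontr)
  assume "r \<noteq> 0"
  then have "(\<integral>\<^sup>+x. ennreal (norm r) \<partial>(lborel::'a measure)) = \<infinity>"
    by (simp add: nn_integral_const ennreal_mult_top)
  with assms show False by (simp add: integrable_iff_bounded)
qed

section \<open>Holomorphic parameter integrals\<close>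

definition exp_integrable :: "('a::euclidean_space \<Rightarrow> complex) \<Rightarrow> bool" where
  "exp_integrable \<phi> \<longleftrightarrow>
     \<phi> \<in> borel_measurable borel \<and> (\<forall>a. integrable lborel (\<lambda>t. norm (\<phi> t) * exp (a * norm t)))"

definition laplace_along :: "('a::euclidean_space \<Rightarrow> complex) \<Rightarrow> 'a \<Rightarrow> complex \<Rightarrow> complex" where
  "laplace_along \<phi> v \<zeta> = (LINT t|lborel. \<phi> t * exp (\<zeta> * complex_of_real (t \<bullet> v)))"

text \<open>The kernel is \<open>exp(2\<pi>i t\<cdot>y)\<close>; the sign convention is irrelevant for uniqueness.\<close>

definition fourier :: "('a::euclidean_space \<Rightarrow> complex) \<Rightarrow> 'a \<Rightarrow> complex" where
  "fourier \<phi> y = laplace_along \<phi> ((2 * pi) *\<^sub>R y) \<i>"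

lemma exp_integrable_measurable:
  "exp_integrable \<phi> \<Longrightarrow> \<phi> \<in> borel_measurable borel"
  by (simp add: exp_integrable_def)

lemma exp_integrableI:
  fixes \<phi> :: "'a::euclidean_space \<Rightarrow> complex"
  assumes [measurable]: "\<phi> \<in> borel_measurable borel" and "c > 0"
    and int: "integrable lborel (\<lambda>t. norm (\<phi> t) * exp (c * norm t ^ 2))"
  shows "exp_integrable \<phi>"
  unfolding exp_integrable_def
proof (intro conjI allI)
  fix a :: real
  show "integrable lborel (\<lambda>t. norm (\<phi> t) * exp (a * norm t))"
  proof (rule Bochner_Integration.integrable_bound)
    show "integrable lborel (\<lambda>t. exp (a\<^sup>2 / (4 * c)) * (norm (\<phi> t) * exp (c * norm t ^ 2)))"
      using int by (rule integrable_mult_right)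
    have "norm (\<phi> t) * exp (a * norm t) \<le> norm (\<phi> t) * exp (a\<^sup>2 / (4 * c) + c * norm t ^ 2)"
      for t :: 'a
      using mult_le_square_bound[OF \<open>c > 0\<close>, of a "norm t"] by (intro mult_left_mono) auto
    then show "AE t in lborel. norm (norm (\<phi> t) * exp (a * norm t))
                 \<le> norm (exp (a\<^sup>2 / (4 * c)) * (norm (\<phi> t) * exp (c * norm t ^ 2)))"
      by (intro AE_I2) (simp add: exp_add mult_ac)
  qed measurable
qed simp

lemma exp_integrable_gaussian:
  assumes "\<alpha> > 0"
  shows "exp_integrable (\<lambda>t::'a::euclidean_space. complex_of_real (gaussian \<alpha> t))"
proof (rule exp_integrableI[where c = "pi * \<alpha> / 2"])
  have "norm (complex_of_real (gaussian \<alpha> t)) * exp (pi * \<alpha> / 2 * norm t ^ 2)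
      = gaussian (\<alpha> / 2) t" for t :: 'a
    by (simp add: exp_add[symmetric] field_simps)
  then show "integrable lborel (\<lambda>t::'a. norm (complex_of_real (gaussian \<alpha> t)) * exp (pi * \<alpha> / 2 * norm t ^ 2))"
    using integrable_gaussian[of "\<alpha> / 2", where 'a='a] assms by simp
qed (use assms in auto)

lemma exp_integrable_mult_gaussian:
  fixes f :: "'a::euclidean_space \<Rightarrow> complex"
  assumes [measurable]: "f \<in> borel_measurable borel"
    and sq: "integrable lborel (\<lambda>t. norm (f t) ^ 2)" and "\<alpha> > 0"
  shows "exp_integrable (\<lambda>t. f t * complex_of_real (gaussian \<alpha> t))"
proof (rule exp_integrableI[where c = "pi * \<alpha> / 2"])
  have bound: "norm (f t * complex_of_real (gaussian \<alpha> t)) * exp (pi * \<alpha> / 2 * norm t ^ 2)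
      \<le> (norm (f t) ^ 2 + gaussian \<alpha> t) / 2" for t :: 'a
  proof -
    have "norm (f t * complex_of_real (gaussian \<alpha> t)) * exp (pi * \<alpha> / 2 * norm t ^ 2)
        = norm (f t) * (gaussian \<alpha> t * exp (pi * \<alpha> / 2 * norm t ^ 2))"
      by (simp add: norm_mult)
    also have "gaussian \<alpha> t * exp (pi * \<alpha> / 2 * norm t ^ 2) = gaussian (\<alpha> / 2) t"
      by (simp add: exp_add[symmetric] field_simps)
    also have "norm (f t) * gaussian (\<alpha> / 2) t \<le> (norm (f t) ^ 2 + (gaussian (\<alpha> / 2) t)\<^sup>2) / 2"
      by (rule mult_le_sum_squares_half)
    also have "(gaussian (\<alpha> / 2) t)\<^sup>2 = gaussian \<alpha> t"
      by (simp add: power2_eq_square exp_add[symmetric])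
    finally show ?thesis .
  qed
  show "integrable lborel (\<lambda>t. norm (f t * complex_of_real (gaussian \<alpha> t)) * exp (pi * \<alpha> / 2 * norm t ^ 2))"
  proof (rule Bochner_Integration.integrable_bound)
    show "integrable lborel (\<lambda>t. (norm (f t) ^ 2 + gaussian \<alpha> t) / 2)"
      using sq integrable_gaussian[OF \<open>\<alpha> > 0\<close>, where 'a='a]
      by (intro integrable_divide Bochner_Integration.integrable_add)
    show "AE t in lborel. norm (norm (f t * complex_of_real (gaussian \<alpha> t)) * exp (pi * \<alpha> / 2 * norm t ^ 2))
            \<le> norm ((norm (f t) ^ 2 + gaussian \<alpha> t) / 2)"
      using bound by (intro AE_I2) (simp add: abs_of_nonneg)
  qed measurable
qed (use assms in auto)

lemma exp_integrable_laplace_integrable: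
  assumes "exp_integrable \<phi>"
  shows "integrable lborel (\<lambda>t. \<phi> t * exp (z * complex_of_real (t \<bullet> v)))"
proof (rule Bochner_Integration.integrable_bound)
  show "integrable lborel (\<lambda>t. norm (\<phi> t) * exp (norm z * norm v * norm t))"
    using assms unfolding exp_integrable_def by blast
  have "norm (\<phi> t * exp (z * complex_of_real (t \<bullet> v))) \<le> norm (\<phi> t) * exp (norm z * norm v * norm t)"
    for t
    unfolding norm_mult by (intro mult_left_mono norm_exp_mult_inner_le) simp
  then show "AE t in lborel. norm (\<phi> t * exp (z * complex_of_real (t \<bullet> v)))
          \<le> norm (norm (\<phi> t) * exp (norm z * norm v * norm t))"
    by (intro AE_I2) simp
qed (use exp_integrable_measurable[OF assms] in measurable)

lemma exp_integrable_laplace_deriv_integrable: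
  assumes "exp_integrable \<phi>"
  shows "integrable lborel (\<lambda>t. \<phi> t * complex_of_real (t \<bullet> v) * exp (z * complex_of_real (t \<bullet> v)))"
proof (rule Bochner_Integration.integrable_bound)
  show "integrable lborel (\<lambda>t. norm (\<phi> t) * exp ((norm z + 1) * norm v * norm t))"
    using assms unfolding exp_integrable_def by blast
  have "\<bar>t \<bullet> v\<bar> * norm (exp (z * complex_of_real (t \<bullet> v))) \<le> exp ((norm z + 1) * norm v * norm t)"
    for t :: 'a
  proof -
    have "\<bar>t \<bullet> v\<bar> * norm (exp (z * complex_of_real (t \<bullet> v))) \<le> exp \<bar>t \<bullet> v\<bar> * exp (norm z * \<bar>t \<bullet> v\<bar>)"
      by (intro mult_mono abs_le_exp_abs norm_exp_mult_of_real_le) auto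
    also have "\<dots> = exp ((norm z + 1) * \<bar>t \<bullet> v\<bar>)" by (simp add: exp_add[symmetric] algebra_simps)
    also have "\<dots> \<le> exp ((norm z + 1) * norm v * norm t)"
      using mult_left_mono[OF Cauchy_Schwarz_ineq2[of t v], of "norm z + 1"] by (simp add: mult_ac)
    finally show ?thesis .
  qed
  then show "AE t in lborel. norm (\<phi> t * complex_of_real (t \<bullet> v) * exp (z * complex_of_real (t \<bullet> v)))
          \<le> norm (norm (\<phi> t) * exp ((norm z + 1) * norm v * norm t))"
    by (intro AE_I2) (auto simp: norm_mult mult.assoc intro!: mult_left_mono)
qed (use exp_integrable_measurable[OF assms] in measurable)

lemma norm_exp_mult_exp_remainder_le:
  fixes h z :: complex and r :: real
  assumes "norm h \<le> 1"
  shows "norm (exp (z * complex_of_real r) * (exp (h * complex_of_real r) - 1 - h * complex_of_real r))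
         \<le> norm h ^ 2 * (2 * exp ((norm z + 2) * \<bar>r\<bar>))"
proof -
  have remainder: "norm (exp (h * complex_of_real r) - 1 - h * complex_of_real r)
      \<le> (norm h * \<bar>r\<bar>)^2 * exp (norm h * \<bar>r\<bar>)"
    using norm_exp_sub_one_sub_le[of "h * complex_of_real r"] by (simp add: norm_mult)
  have "(norm h * \<bar>r\<bar>)^2 * exp (norm h * \<bar>r\<bar>) \<le> norm h ^ 2 * (2 * exp \<bar>r\<bar>) * exp \<bar>r\<bar>"
  proof -
    have "exp (norm h * \<bar>r\<bar>) \<le> exp \<bar>r\<bar>"
      using assms by (simp add: mult_left_le_one_le)
    then show ?thesis
      using power2_le_2_exp_abs[of r] by (auto simp: power_mult_distrib intro!: mult_mono mult_left_mono)
  qed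
  with remainder have "norm (exp (z * complex_of_real r) * (exp (h * complex_of_real r) - 1 - h * complex_of_real r))
      \<le> exp (norm z * \<bar>r\<bar>) * (norm h ^ 2 * (2 * exp \<bar>r\<bar>) * exp \<bar>r\<bar>)"
    unfolding norm_mult by (intro mult_mono norm_exp_mult_of_real_le) auto
  also have "\<dots> = norm h ^ 2 * (2 * exp ((norm z + 2) * \<bar>r\<bar>))"
    by (simp add: exp_add[symmetric] algebra_simps)
  finally show ?thesis .
qed

lemma laplace_along_taylor_bound:
  assumes "exp_integrable \<phi>" and "norm h \<le> 1"
  shows "norm (laplace_along \<phi> v (z + h) - laplace_along \<phi> v z
                 - h * laplace_along (\<lambda>t. \<phi> t * complex_of_real (t \<bullet> v)) v z)
         \<le> norm h ^ 2 * (LINT t|lborel. 2 * (norm (\<phi> t) * exp ((norm z + 2) * norm v * norm t)))"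
proof -
  have [measurable]: "\<phi> \<in> borel_measurable borel" using exp_integrable_measurable[OF assms(1)] .
  let ?s = "\<lambda>t. complex_of_real (t \<bullet> v)"
  let ?B = "\<lambda>t. 2 * (norm (\<phi> t) * exp ((norm z + 2) * norm v * norm t))"
  let ?r = "\<lambda>t. \<phi> t * (exp (z * ?s t) * (exp (h * ?s t) - 1 - h * ?s t))"
  have integrable_B: "integrable lborel ?B"
    using assms(1) unfolding exp_integrable_def by (intro integrable_mult_right) blast
  have "(\<lambda>t. \<phi> t * exp ((z + h) * ?s t) - \<phi> t * exp (z * ?s t) - h * (\<phi> t * ?s t * exp (z * ?s t))) = ?r"
    by (simp add: fun_eq_iff distrib_right exp_add algebra_simps)
  moreover have "integrable lborel (\<lambda>t. \<phi> t * exp ((z + h) * ?s t) - \<phi> t * exp (z * ?s t) - h * (\<phi> t * ?s t * exp (z * ?s t)))"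
    using exp_integrable_laplace_integrable[OF assms(1)] exp_integrable_laplace_deriv_integrable[OF assms(1)]
    by (intro Bochner_Integration.integrable_diff integrable_mult_right)
  moreover have "laplace_along \<phi> v (z + h) - laplace_along \<phi> v z
                 - h * laplace_along (\<lambda>t. \<phi> t * ?s t) v z
      = (LINT t|lborel. \<phi> t * exp ((z + h) * ?s t) - \<phi> t * exp (z * ?s t) - h * (\<phi> t * ?s t * exp (z * ?s t)))"
    using exp_integrable_laplace_integrable[OF assms(1)] exp_integrable_laplace_deriv_integrable[OF assms(1)]
    by (simp add: laplace_along_def integral_diff mult.assoc)
  ultimately have integrable_r: "integrable lborel ?r"
    and eq: "laplace_along \<phi> v (z + h) - laplace_along \<phi> v z - h * laplace_along (\<lambda>t. \<phi> t * ?s t) v z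
               = (LINT t|lborel. ?r t)"
    by simp_all
  have "norm (?r t) \<le> norm h ^ 2 * ?B t" for t
  proof -
    have "norm (?r t) \<le> norm (\<phi> t) * (norm h ^ 2 * (2 * exp ((norm z + 2) * \<bar>t \<bullet> v\<bar>)))"
      unfolding norm_mult[of "\<phi> t"] by (intro mult_left_mono norm_exp_mult_exp_remainder_le assms) simp
    also have "\<dots> \<le> norm (\<phi> t) * (norm h ^ 2 * (2 * exp ((norm z + 2) * norm v * norm t)))"
      using mult_left_mono[OF Cauchy_Schwarz_ineq2[of t v], of "norm z + 2"]
      by (intro mult_left_mono) (auto simp: mult_ac)
    finally show ?thesis by (simp add: mult_ac)
  qed
  then have "norm (LINT t|lborel. ?r t) \<le> (LINT t|lborel. norm h ^ 2 * ?B t)"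
    using integrable_r integrable_B
    by (intro order_trans[OF integral_norm_bound] integral_mono) auto
  then show ?thesis unfolding eq by simp
qed

lemma laplace_along_has_field_derivative:
  assumes "exp_integrable \<phi>"
  shows "(laplace_along \<phi> v has_field_derivative laplace_along (\<lambda>t. \<phi> t * complex_of_real (t \<bullet> v)) v z) (at z)"
proof -
  define F where "F = laplace_along \<phi> v"
  define D where "D = laplace_along (\<lambda>t. \<phi> t * complex_of_real (t \<bullet> v)) v z"
  define K where "K = (LINT t|lborel. 2 * (norm (\<phi> t) * exp ((norm z + 2) * norm v * norm t)))"
  have "norm ((F (z + h) - F z) / h - D) \<le> norm h * K" if "h \<noteq> 0" "norm h < 1" for h
  proof -
    have "norm ((F (z + h) - F z) / h - D) = norm (F (z + h) - F z - h * D) / norm h"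
      using \<open>h \<noteq> 0\<close> by (simp add: norm_divide field_simps)
    also have "\<dots> \<le> norm h ^ 2 * K / norm h"
      using laplace_along_taylor_bound[OF assms, of h v z] that
      by (intro divide_right_mono) (auto simp: F_def D_def K_def)
    also have "\<dots> = norm h * K" using \<open>h \<noteq> 0\<close> by (simp add: power2_eq_square)
    finally show ?thesis .
  qed
  then have "eventually (\<lambda>h. norm ((F (z + h) - F z) / h - D) \<le> norm h * K) (at 0)"
    unfolding eventually_at by (intro exI[of _ 1]) auto
  moreover have "((\<lambda>h. norm h * K) \<longlongrightarrow> 0) (at (0::complex))"
    by (auto intro!: tendsto_eq_intros)
  ultimately have "((\<lambda>h. (F (z + h) - F z) / h - D) \<longlongrightarrow> 0) (at 0)"
    by (rule Lim_null_comparison)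
  then show ?thesis
    unfolding F_def[symmetric] D_def[symmetric] DERIV_def by (rule LIM_zero_cancel)
qed

lemma holomorphic_laplace_along:
  "exp_integrable \<phi> \<Longrightarrow> laplace_along \<phi> v holomorphic_on S"
  unfolding holomorphic_on_def field_differentiable_def
  using laplace_along_has_field_derivative by (blast intro: has_field_derivative_at_within)

lemma zero_islimpt_range_of_real: "(0::complex) islimpt range complex_of_real"
  unfolding islimpt_approachable
proof (intro allI impI)
  fix e :: real assume "e > 0"
  show "\<exists>x'\<in>range complex_of_real. x' \<noteq> 0 \<and> dist x' 0 < e"
  proof (rule bexI)
    show "complex_of_real (e/2) \<in> range complex_of_real" by (rule rangeI)
    show "complex_of_real (e/2) \<noteq> 0 \<and> dist (complex_of_real (e/2)) 0 < e"
      using \<open>e > 0\<close> by (simp add: dist_norm)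
  qed
qed

lemma entire_eq_const_on_reals:
  assumes "f holomorphic_on UNIV" and "\<And>r. f (complex_of_real r) = c"
  shows "f z = c"
proof -
  have "f z - c = 0"
    by (rule analytic_continuation[where f="\<lambda>z. f z - c" and S=UNIV and U="range complex_of_real"
          and \<xi>=0 and w=z])
       (use assms zero_islimpt_range_of_real in \<open>auto intro!: holomorphic_intros\<close>)
  then show ?thesis by simp
qed

text \<open>Complete the square: for real \<open>\<zeta>\<close>, \<open>exp(-\<pi>|y|\<^sup>2\<zeta>\<^sup>2/\<alpha>)\<close> times the transform at \<open>\<zeta>\<close> is the
  integral of a translate of the Gaussian, hence constant; continue analytically to \<open>\<zeta> = i\<close>.\<close>

lemma fourier_gaussian:
  fixes y :: "'a::euclidean_space"
  assumes "\<alpha> > 0"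
  shows "fourier (\<lambda>t. complex_of_real (gaussian \<alpha> t)) y
       = complex_of_real (LINT t|lborel. gaussian \<alpha> (t::'a)) * exp (- pi * norm y ^ 2 / \<alpha>)"
proof -
  define v where "v = (2 * pi) *\<^sub>R y"
  define I where "I = (LINT t|lborel. gaussian \<alpha> (t::'a))"
  define \<Psi> where "\<Psi> = (\<lambda>\<zeta>. exp (complex_of_real (- pi * norm y ^ 2 / \<alpha>) * \<zeta>\<^sup>2)
                          * laplace_along (\<lambda>t. complex_of_real (gaussian \<alpha> t)) v \<zeta>)"
  have "\<Psi> holomorphic_on UNIV"
    unfolding \<Psi>_def
    by (intro holomorphic_intros holomorphic_laplace_along exp_integrable_gaussian assms)
  moreover have "\<Psi> (complex_of_real r) = complex_of_real I" for r
  proof -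
    define w where "w = (r / \<alpha>) *\<^sub>R y"
    have "- pi * norm y ^ 2 / \<alpha> * r\<^sup>2 + (- pi * \<alpha> * norm t ^ 2 + r * (t \<bullet> v))
        = - pi * \<alpha> * norm (- w + t) ^ 2" for t
    proof -
      have square: "norm (- w + t) ^ 2 = norm t ^ 2 - 2 * (t \<bullet> w) + norm w ^ 2"
        by (simp add: power2_norm_eq_inner inner_diff_left inner_diff_right inner_commute)
      have w_v: "t \<bullet> w = (r/\<alpha>) * (t \<bullet> y)" "norm w ^ 2 = (r/\<alpha>)^2 * norm y ^ 2"
        "t \<bullet> v = 2 * pi * (t \<bullet> y)"
        unfolding w_def v_def by (simp_all add: power_mult_distrib power_divide)
      show ?thesis unfolding square w_v using assms by (simp add: field_simps power2_eq_square)
    qed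
    then have "exp (complex_of_real (- pi * norm y ^ 2 / \<alpha>) * (complex_of_real r)\<^sup>2)
          * (complex_of_real (gaussian \<alpha> t) * exp (complex_of_real r * complex_of_real (t \<bullet> v)))
        = complex_of_real (gaussian \<alpha> (- w + t))" for t
      by (simp only: exp_add[symmetric] of_real_power[symmetric] of_real_mult[symmetric]
          of_real_add[symmetric] exp_of_real)
    then have "\<Psi> (complex_of_real r) = (LINT t|lborel. complex_of_real (gaussian \<alpha> (- w + t)))"
      unfolding \<Psi>_def laplace_along_def by (simp flip: integral_mult_right_zero)
    also have "\<dots> = complex_of_real I"
      unfolding I_def by (subst integral_lborel_translate) auto
    finally show ?thesis .
  qed
  ultimately have "\<Psi> \<i> = complex_of_real I" by (rule entire_eq_const_on_reals)
  then have "exp (complex_of_real (pi * norm y ^ 2 / \<alpha>)) * fourier (\<lambda>t. complex_of_real (gaussian \<alpha> t)) y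
      = complex_of_real I"
    unfolding \<Psi>_def fourier_def v_def by (simp add: power2_eq_square mult_ac)
  then show ?thesis
    unfolding I_def by (simp add: exp_minus field_simps flip: exp_of_real)
qed

section \<open>A maximum principle in a horizontal strip\<close>

lemma mem_box_Complex:
  "z \<in> box (Complex a c) (Complex b d) \<longleftrightarrow> a < Re z \<and> Re z < b \<and> c < Im z \<and> Im z < d"
  by (auto simp: mem_box Basis_complex_def)

lemma mem_cbox_Complex:
  "z \<in> cbox (Complex a c) (Complex b d) \<longleftrightarrow> a \<le> Re z \<and> Re z \<le> b \<and> c \<le> Im z \<and> Im z \<le> d"
  by (auto simp: mem_box Basis_complex_def)

lemma norm_exp_neg_square:
  "norm (exp (- complex_of_real e * (z - complex_of_real x0)^2)) = exp (- e * ((Re z - x0)^2 - (Im z)^2))"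
  by (simp add: norm_exp_eq_Re power2_eq_square algebra_simps)

lemma abs_Im_eq_imp_on_strip_boundary:
  "\<bar>Im z\<bar> = R \<Longrightarrow> z = Complex (Re z) R \<or> z = Complex (Re z) (-R)"
  by (cases "Im z \<ge> 0") (auto simp: complex_eq_iff)

text \<open>The horizontal sides of the rectangle lie on the boundary of the strip; on the vertical sides
  the damping factor \<open>exp(-\<epsilon>A\<^sup>2)\<close> beats the a priori bound \<open>B\<close>.\<close>

lemma damped_bound_on_rectangle_frontier:
  fixes F :: "complex \<Rightarrow> complex"
  assumes bnd: "\<And>z. \<bar>Im z\<bar> \<le> R \<Longrightarrow> norm (F z) \<le> B"
    and bdry: "\<And>x. norm (F (Complex x R)) \<le> C" "\<And>x. norm (F (Complex x (-R))) \<le> C"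
    and "e > 0" and damped: "B * exp (- e * A\<^sup>2) < e"
    and z: "z \<in> cbox (Complex (x0 - A) (-R)) (Complex (x0 + A) R)"
      "z \<notin> box (Complex (x0 - A) (-R)) (Complex (x0 + A) R)"
  shows "norm (F z) * exp (- e * ((Re z - x0)^2 - (Im z)^2)) \<le> (C + e) * exp (e * R\<^sup>2)"
proof -
  have "C \<ge> 0" using bdry(1)[of 0] norm_ge_zero order_trans by blast
  have Im_z: "\<bar>Im z\<bar> \<le> R" using z(1) unfolding mem_cbox_Complex by auto
  then have "(Im z)^2 \<le> R^2" using power_mono[OF Im_z, of 2] by simp
  show ?thesis
  proof (cases "\<bar>Im z\<bar> = R")
    case True
    from abs_Im_eq_imp_on_strip_boundary[OF True] have "norm (F z) \<le> C" using bdry by metis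
    moreover have "(Im z)^2 = R^2" using True by (metis power2_abs)
    then have "exp (- e * ((Re z - x0)^2 - (Im z)^2)) \<le> exp (e * R\<^sup>2)"
      using \<open>e > 0\<close> mult_nonneg_nonneg[of e "(Re z - x0)^2"] by (simp add: algebra_simps)
    ultimately show ?thesis using \<open>C \<ge> 0\<close> \<open>e > 0\<close> by (intro mult_mono) auto
  next
    case False
    then have "\<bar>Re z - x0\<bar> = A" using z unfolding mem_cbox_Complex mem_box_Complex by auto
    then have "(Re z - x0)^2 = A^2" by (metis power2_abs)
    then have "norm (F z) * exp (- e * ((Re z - x0)^2 - (Im z)^2))
        = norm (F z) * exp (- e * A^2) * exp (e * (Im z)^2)"
      by (simp add: exp_add[symmetric] algebra_simps)
    also have "\<dots> \<le> B * exp (- e * A^2) * exp (e * R^2)"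
      using bnd[OF Im_z] \<open>(Im z)^2 \<le> R^2\<close> \<open>e > 0\<close>
      by (intro mult_mono) (auto simp: order_trans[OF norm_ge_zero])
    also have "\<dots> \<le> (C + e) * exp (e * R\<^sup>2)"
      using damped \<open>C \<ge> 0\<close> by (intro mult_right_mono) auto
    finally show ?thesis .
  qed
qed

text \<open>Maximum modulus for \<open>F(z) exp(-\<epsilon>(z - Re z\<^sub>0)\<^sup>2)\<close> on a long rectangle around \<open>z\<^sub>0\<close>; at \<open>z\<^sub>0\<close>
  the damping factor has modulus \<open>exp(\<epsilon>(Im z\<^sub>0)\<^sup>2) \<ge> 1\<close>.\<close>

lemma strip_maximum_principle_approx:
  fixes F :: "complex \<Rightarrow> complex"
  assumes holo: "F holomorphic_on UNIV" and "R > 0"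
    and bnd: "\<And>z. \<bar>Im z\<bar> \<le> R \<Longrightarrow> norm (F z) \<le> B"
    and bdry: "\<And>x. norm (F (Complex x R)) \<le> C" "\<And>x. norm (F (Complex x (-R))) \<le> C"
    and z0: "\<bar>Im z0\<bar> < R" and "e > 0"
  shows "norm (F z0) \<le> (C + e) * exp (e * R\<^sup>2)"
proof -
  define x0 where "x0 = Re z0"
  have "((\<lambda>A. B * exp (- e * A\<^sup>2)) \<longlongrightarrow> 0) at_top" using \<open>e > 0\<close> by real_asymp
  then have "eventually (\<lambda>A. B * exp (- e * A\<^sup>2) < e) at_top"
    using order_tendstoD(2) \<open>e > 0\<close> by blast
  then obtain A0 where A0: "\<And>A. A \<ge> A0 \<Longrightarrow> B * exp (- e * A\<^sup>2) < e"
    unfolding eventually_at_top_linorder by blast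
  define A where "A = max A0 1"
  have "A > 0" and damped: "B * exp (- e * A\<^sup>2) < e" using A0[of A] by (auto simp: A_def)
  define G where "G = (\<lambda>z. F z * exp (- complex_of_real e * (z - complex_of_real x0)^2))"
  define S where "S = box (Complex (x0 - A) (-R)) (Complex (x0 + A) R)"
  have "S \<noteq> {}" using \<open>A > 0\<close> \<open>R > 0\<close> by (auto simp: S_def box_ne_empty Basis_complex_def)
  have holoG: "G holomorphic_on UNIV" unfolding G_def
    by (intro holomorphic_intros holomorphic_on_subset[OF holo]) auto
  have "norm (G z0) \<le> (C + e) * exp (e * R\<^sup>2)"
  proof (rule maximum_modulus_frontier[where S = S and f = G])
    show "G holomorphic_on interior S" using holoG holomorphic_on_subset by blast
    show "continuous_on (closure S) G"
      using holoG holomorphic_on_imp_continuous_on continuous_on_subset by blast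
    show "bounded S" unfolding S_def by (rule bounded_box)
    show "z0 \<in> S" using z0 \<open>A > 0\<close> unfolding S_def mem_box_Complex x0_def by auto
  next
    fix z assume "z \<in> frontier S"
    then have "z \<in> cbox (Complex (x0 - A) (-R)) (Complex (x0 + A) R)"
      "z \<notin> box (Complex (x0 - A) (-R)) (Complex (x0 + A) R)"
      using \<open>S \<noteq> {}\<close> by (auto simp: frontier_def S_def closure_box interior_open[OF open_box])
    then show "norm (G z) \<le> (C + e) * exp (e * R\<^sup>2)"
      unfolding G_def norm_mult norm_exp_neg_square
      using damped_bound_on_rectangle_frontier[OF bnd bdry \<open>e > 0\<close> damped] by blast
  qed
  moreover have "norm (G z0) = norm (F z0) * exp (e * (Im z0)^2)"
    unfolding G_def norm_mult norm_exp_neg_square by (simp add: x0_def)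
  moreover have "norm (F z0) \<le> norm (F z0) * exp (e * (Im z0)^2)"
    using \<open>e > 0\<close> by (simp add: mult_le_cancel_left1)
  ultimately show ?thesis by linarith
qed

lemma strip_maximum_principle:
  fixes F :: "complex \<Rightarrow> complex"
  assumes holo: "F holomorphic_on UNIV" and R: "R > 0"
    and bnd: "\<And>z. \<bar>Im z\<bar> \<le> R \<Longrightarrow> norm (F z) \<le> B"
    and bdry: "\<And>x. norm (F (Complex x R)) \<le> C" "\<And>x. norm (F (Complex x (-R))) \<le> C"
    and z0: "\<bar>Im z0\<bar> \<le> R"
  shows "norm (F z0) \<le> C"
proof (cases "\<bar>Im z0\<bar> = R")
  case True
  from abs_Im_eq_imp_on_strip_boundary[OF True] show ?thesis using bdry by metis
next
  case False
  with z0 have "\<bar>Im z0\<bar> < R" by simp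
  have "((\<lambda>e. (C + e) * exp (e * R\<^sup>2)) \<longlongrightarrow> (C + 0) * exp (0 * R\<^sup>2)) (at_right 0)"
    by (intro tendsto_intros)
  moreover have "eventually (\<lambda>e. norm (F z0) \<le> (C + e) * exp (e * R\<^sup>2)) (at_right (0::real))"
    unfolding eventually_at_right_field
    by (intro exI[of _ 1]) (auto intro!: strip_maximum_principle_approx[OF holo R bnd bdry \<open>\<bar>Im z0\<bar> < R\<close>])
  ultimately have "norm (F z0) \<le> (C + 0) * exp (0 * R\<^sup>2)"
    by (rule tendsto_lowerbound) simp
  then show ?thesis by simp
qed

section \<open>Uniqueness of the Fourier transform\<close>

lemma emeasure_density_eq_integral:
  fixes f :: "'a::euclidean_space \<Rightarrow> real"
  assumes [measurable]: "f \<in> borel_measurable borel" "X \<in> sets borel"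
    and "integrable lborel f" and "\<And>t. f t \<ge> 0"
  shows "emeasure (density lborel (\<lambda>t. ennreal (f t))) X = ennreal (LINT t|lborel. f t * indicator X t)"
proof -
  have "emeasure (density lborel (\<lambda>t. ennreal (f t))) X = (\<integral>\<^sup>+t. ennreal (f t * indicator X t) \<partial>lborel)"
    by (subst emeasure_density) (auto intro!: nn_integral_cong simp: indicator_def)
  also have "\<dots> = ennreal (LINT t|lborel. f t * indicator X t)"
    using assms integrable_real_mult_indicator[of X lborel f]
    by (intro nn_integral_eq_integral) auto
  finally show ?thesis .
qed

lemma density_lborel_eq_if_eq_on_boxes:
  fixes P Q :: "'a::euclidean_space \<Rightarrow> ennreal"
  assumes [measurable]: "P \<in> borel_measurable borel" "Q \<in> borel_measurable borel"
    and finite: "(\<integral>\<^sup>+t. P t \<partial>lborel) \<noteq> \<infinity>"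
    and boxes: "\<And>a b. emeasure (density lborel P) (box a b) = emeasure (density lborel Q) (box a b)"
  shows "density lborel P = density lborel Q"
proof (rule measure_eqI_generator_eq[where E = "range (\<lambda>(a, b). box a b::'a set)" and \<Omega> = UNIV
      and A = "\<lambda>n::nat. box (- (real n *\<^sub>R One)) (real n *\<^sub>R One)"])
  show "Int_stable (range (\<lambda>(a, b). box a b::'a set))"
    by (auto simp: Int_stable_def box_Int_box)
  show "sets (density lborel P) = sigma_sets UNIV (range (\<lambda>(a, b). box a b::'a set))"
    "sets (density lborel Q) = sigma_sets UNIV (range (\<lambda>(a, b). box a b::'a set))"
    by (simp_all add: borel_eq_box)
  show "(\<Union>n::nat. box (- (real n *\<^sub>R One)) (real n *\<^sub>R One)) = (UNIV::'a set)"
    by (rule UN_box_eq_UNIV)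
  show "emeasure (density lborel P) (box (- (real n *\<^sub>R One)) (real n *\<^sub>R One)) \<noteq> \<infinity>" for n
  proof -
    have "emeasure (density lborel P) (box (- (real n *\<^sub>R One)) (real n *\<^sub>R One))
        \<le> emeasure (density lborel P) UNIV"
      by (intro emeasure_mono) auto
    also have "\<dots> = (\<integral>\<^sup>+t. P t \<partial>lborel)" by (simp add: emeasure_density)
    finally show ?thesis using finite by (auto simp: top_unique)
  qed
qed (use boxes in auto)

lemma AE_zero_if_box_integrals_zero:
  fixes \<rho> :: "'a::euclidean_space \<Rightarrow> real"
  assumes [measurable]: "\<rho> \<in> borel_measurable borel" and int: "integrable lborel \<rho>"
    and boxes: "\<And>a b. (LINT t|lborel. \<rho> t * indicator (box a b) t) = 0"
  shows "AE t in lborel. \<rho> t = 0"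
proof -
  define P where "P = (\<lambda>t. ennreal (max 0 (\<rho> t)))"
  define Q where "Q = (\<lambda>t. ennreal (max 0 (- \<rho> t)))"
  have [measurable]: "P \<in> borel_measurable borel" "Q \<in> borel_measurable borel"
    unfolding P_def Q_def by measurable
  have intP: "integrable lborel (\<lambda>t. max 0 (\<rho> t))" and intQ: "integrable lborel (\<lambda>t. max 0 (- \<rho> t))"
    using int by (auto intro!: integrable_max)
  have "density lborel P = density lborel Q"
  proof (rule density_lborel_eq_if_eq_on_boxes)
    show "(\<integral>\<^sup>+t. P t \<partial>lborel) \<noteq> \<infinity>"
      unfolding P_def using nn_integral_eq_integral[OF intP] by simp
    fix a b :: 'a
    have "(LINT t|lborel. max 0 (\<rho> t) * indicator (box a b) t) - (LINT t|lborel. max 0 (- \<rho> t) * indicator (box a b) t)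
        = (LINT t|lborel. max 0 (\<rho> t) * indicator (box a b) t - max 0 (- \<rho> t) * indicator (box a b) t)"
      using integrable_real_mult_indicator[OF _ intP, of "box a b"] integrable_real_mult_indicator[OF _ intQ, of "box a b"]
      by (intro Bochner_Integration.integral_diff[symmetric]) auto
    also have "\<dots> = (LINT t|lborel. \<rho> t * indicator (box a b) t)"
      by (intro Bochner_Integration.integral_cong) (auto simp: indicator_def max_def)
    finally have "(LINT t|lborel. max 0 (\<rho> t) * indicator (box a b) t)
        = (LINT t|lborel. max 0 (- \<rho> t) * indicator (box a b) t)"
      using boxes by simp
    then show "emeasure (density lborel P) (box a b) = emeasure (density lborel Q) (box a b)"
      unfolding P_def Q_def using intP intQ by (simp add: emeasure_density_eq_integral)
  qed measurable
  then have "AE t in lborel. P t = Q t"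
    by (intro sigma_finite_measure.density_unique[OF sigma_finite_lborel]) auto
  then show ?thesis
    by eventually_elim (auto simp: P_def Q_def max_def split: if_splits)
qed

lemma AE_zero_if_box_integrals_zero_complex:
  fixes \<psi> :: "'a::euclidean_space \<Rightarrow> complex"
  assumes [measurable]: "\<psi> \<in> borel_measurable borel" and int: "integrable lborel \<psi>"
    and boxes: "\<And>a b. (LINT t|lborel. \<psi> t * indicator (box a b) t) = 0"
  shows "AE t in lborel. \<psi> t = 0"
proof -
  have integrable_box: "integrable lborel (\<lambda>t. \<psi> t * indicator (box a b) t)" for a b
    by (rule Bochner_Integration.integrable_bound[OF int]) (auto simp: indicator_def)
  have "AE t in lborel. Re (\<psi> t) = 0"
  proof (rule AE_zero_if_box_integrals_zero)
    fix a b :: 'a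
    have "(LINT t|lborel. Re (\<psi> t) * indicator (box a b) t) = Re (LINT t|lborel. \<psi> t * indicator (box a b) t)"
      by (subst integral_bounded_linear[OF bounded_linear_Re integrable_box, symmetric])
         (auto intro!: Bochner_Integration.integral_cong simp: indicator_def)
    then show "(LINT t|lborel. Re (\<psi> t) * indicator (box a b) t) = 0" using boxes by simp
  qed (use int in \<open>auto intro: integrable_bounded_linear[OF bounded_linear_Re]\<close>)
  moreover have "AE t in lborel. Im (\<psi> t) = 0"
  proof (rule AE_zero_if_box_integrals_zero)
    fix a b :: 'a
    have "(LINT t|lborel. Im (\<psi> t) * indicator (box a b) t) = Im (LINT t|lborel. \<psi> t * indicator (box a b) t)"
      by (subst integral_bounded_linear[OF bounded_linear_Im integrable_box, symmetric])
         (auto intro!: Bochner_Integration.integral_cong simp: indicator_def)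
    then show "(LINT t|lborel. Im (\<psi> t) * indicator (box a b) t) = 0" using boxes by simp
  qed (use int in \<open>auto intro: integrable_bounded_linear[OF bounded_linear_Im]\<close>)
  ultimately show ?thesis by eventually_elim (simp add: complex_eq_iff)
qed

lemma integrable_product_lborel:
  fixes f g :: "'a::euclidean_space \<Rightarrow> real"
  assumes [measurable]: "f \<in> borel_measurable borel" "g \<in> borel_measurable borel"
    and "integrable lborel f" "integrable lborel g"
  shows "integrable (lborel \<Otimes>\<^sub>M lborel) (\<lambda>(t, x). f t * g x)"
proof (rule lborel_pair.Fubini_integrable)
  show "integrable lborel (\<lambda>t. LINT x|lborel. norm (case_prod (\<lambda>t x. f t * g x) (t, x)))"
    using assms by (simp add: abs_mult)
  show "AE t in lborel. integrable lborel (\<lambda>x. case_prod (\<lambda>t x. f t * g x) (t, x))"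
    using assms by (intro AE_I2) simp
qed measurable

text \<open>Fubini for \<open>\<psi>(t) gaussian \<alpha> u exp(2\<pi>i u\<cdot>(t - x))\<close>: integrating in \<open>t\<close> first gives \<open>0\<close>,
  integrating in \<open>u\<close> first gives the convolution of \<open>\<psi>\<close> with a Gaussian.\<close>

lemma fourier_zero_imp_gaussian_convolution_zero:
  fixes \<psi> :: "'a::euclidean_space \<Rightarrow> complex"
  assumes [measurable]: "\<psi> \<in> borel_measurable borel" and int: "integrable lborel \<psi>"
    and fourier_zero: "\<And>y. fourier \<psi> y = 0" and "\<alpha> > 0"
  shows "(LINT t|lborel. \<psi> t * complex_of_real (exp (- pi * norm (t - x) ^ 2 / \<alpha>))) = 0"
proof -
  let ?e = "\<lambda>u y. exp (\<i> * complex_of_real (u \<bullet> (2 * pi) *\<^sub>R y))"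
  define g where "g = (\<lambda>u::'a. complex_of_real (gaussian \<alpha> u))"
  define I where "I = (LINT u|lborel. gaussian \<alpha> (u::'a))"
  define f where "f = (\<lambda>t u. \<psi> t * (g u * ?e u (t - x)))"
  have [measurable]: "g \<in> borel_measurable borel" unfolding g_def by measurable
  have norm_f: "norm (f t u) = norm (\<psi> t) * gaussian \<alpha> u" for t u
    unfolding f_def g_def by (simp add: norm_mult)
  have "integrable (lborel \<Otimes>\<^sub>M lborel) (case_prod f)"
  proof (rule Bochner_Integration.integrable_bound)
    show "integrable (lborel \<Otimes>\<^sub>M lborel) (\<lambda>(t, u). norm (\<psi> t) * gaussian \<alpha> (u::'a))"
      by (rule integrable_product_lborel) (use int integrable_gaussian[OF \<open>\<alpha> > 0\<close>] in auto)
    show "case_prod f \<in> borel_measurable (lborel \<Otimes>\<^sub>M lborel)" unfolding f_def by measurable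
  qed (auto simp: norm_f split: prod.splits intro!: AE_I2)
  then have "(LINT u|lborel. LINT t|lborel. f t u) = (LINT t|lborel. LINT u|lborel. f t u)"
    by (rule lborel_pair.Fubini_integral)
  moreover have "(LINT t|lborel. f t u) = 0" for u
  proof -
    have "f t u = (g u * exp (- (\<i> * complex_of_real (u \<bullet> (2 * pi) *\<^sub>R x)))) * (\<psi> t * ?e t u)" for t
    proof -
      have "u \<bullet> (2 * pi) *\<^sub>R (t - x) = t \<bullet> (2 * pi) *\<^sub>R u - u \<bullet> (2 * pi) *\<^sub>R x"
        by (simp add: inner_diff_right inner_commute right_diff_distrib)
      then have "\<i> * complex_of_real (u \<bullet> (2 * pi) *\<^sub>R (t - x))
          = \<i> * complex_of_real (t \<bullet> (2 * pi) *\<^sub>R u) + - (\<i> * complex_of_real (u \<bullet> (2 * pi) *\<^sub>R x))"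
        by (simp add: algebra_simps)
      then show ?thesis unfolding f_def by (simp only: exp_add) (simp add: mult_ac)
    qed
    then have "(LINT t|lborel. f t u) = (g u * exp (- (\<i> * complex_of_real (u \<bullet> (2 * pi) *\<^sub>R x))))
        * (LINT t|lborel. \<psi> t * ?e t u)"
      by (simp only: integral_mult_right_zero)
    then show ?thesis
      using fourier_zero[of u] by (simp add: fourier_def laplace_along_def)
  qed
  moreover have "(LINT u|lborel. f t u) = complex_of_real I * (\<psi> t * complex_of_real (exp (- pi * norm (t - x) ^ 2 / \<alpha>)))" for t
  proof -
    have "(LINT u|lborel. f t u) = \<psi> t * (LINT u|lborel. g u * ?e u (t - x))"
      unfolding f_def by (rule integral_mult_right_zero)
    also have "(LINT u|lborel. g u * ?e u (t - x)) = complex_of_real I * complex_of_real (exp (- pi * norm (t - x) ^ 2 / \<alpha>))"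
      using fourier_gaussian[OF \<open>\<alpha> > 0\<close>, of "t - x"]
      unfolding g_def I_def fourier_def laplace_along_def by simp
    finally show ?thesis by (simp add: mult_ac)
  qed
  ultimately have "complex_of_real I * (LINT t|lborel. \<psi> t * complex_of_real (exp (- pi * norm (t - x) ^ 2 / \<alpha>))) = 0"
    by simp
  then show ?thesis using integral_gaussian_pos[OF \<open>\<alpha> > 0\<close>, where 'a='a] by (simp add: I_def)
qed

lemma AE_lborel_not_in_box_frontier: "AE t in lborel. t \<notin> cbox a b - box (a::'a::euclidean_space) b"
proof -
  have "cbox a b - box a b \<in> null_sets lebesgue"
    using negligible_frontier_interval[of a b] by (simp add: negligible_iff_null_sets)
  then have "cbox a b - box a b \<in> null_sets lborel"
    by (subst null_sets_completion_iff[symmetric]) auto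
  then show ?thesis by (rule AE_not_in)
qed

lemma gaussian_convolution_zero_imp_mollified_box_zero:
  fixes \<psi> :: "'a::euclidean_space \<Rightarrow> complex"
  assumes [measurable]: "\<psi> \<in> borel_measurable borel" and int: "integrable lborel \<psi>"
    and convolution_zero: "\<And>x. (LINT t|lborel. \<psi> t * complex_of_real (exp (- pi * norm (t - x) ^ 2 / \<alpha>))) = 0"
    and "\<alpha> > 0"
  shows "(LINT t|lborel. \<psi> t * complex_of_real
           (LINT y|lborel. indicator (box a b) (t + sqrt \<alpha> *\<^sub>R y) * exp (- pi * norm y ^ 2))) = 0"
proof -
  define B where "B = box a b"
  have [measurable]: "B \<in> sets borel" unfolding B_def by simp
  define k where "k = (\<lambda>t. LINT x|lborel. indicator B x * exp (- pi * norm (t - x) ^ 2 / \<alpha>))"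
  define h where "h = (\<lambda>t x. \<psi> t * complex_of_real (indicator B x * exp (- pi * norm (t - x) ^ 2 / \<alpha>)))"
  have "integrable lborel (indicator B :: 'a \<Rightarrow> real)"
    unfolding B_def using emeasure_lborel_box_finite[of a b] by (simp add: integrable_indicator_iff)
  then have "integrable (lborel \<Otimes>\<^sub>M lborel) (case_prod h)"
    using int \<open>\<alpha> > 0\<close>
    by (intro Bochner_Integration.integrable_bound[OF integrable_product_lborel[of "\<lambda>t. norm (\<psi> t)" "indicator B"]] AE_I2)
       (auto simp: h_def norm_mult indicator_def intro!: mult_left_le)
  then have "(LINT x|lborel. LINT t|lborel. h t x) = (LINT t|lborel. LINT x|lborel. h t x)"
    by (rule lborel_pair.Fubini_integral)
  moreover have "(LINT t|lborel. h t x) = 0" for x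
  proof -
    have "(LINT t|lborel. h t x)
        = complex_of_real (indicator B x) * (LINT t|lborel. \<psi> t * complex_of_real (exp (- pi * norm (t - x) ^ 2 / \<alpha>)))"
      unfolding h_def by (subst integral_mult_right_zero[symmetric]) (simp add: mult_ac)
    then show ?thesis using convolution_zero by simp
  qed
  moreover have "(LINT x|lborel. h t x) = \<psi> t * complex_of_real (k t)" for t
    unfolding h_def k_def by (simp only: integral_mult_right_zero integral_complex_of_real)
  moreover have "k t = sqrt \<alpha> ^ DIM('a) * (LINT y|lborel. indicator B (t + sqrt \<alpha> *\<^sub>R y) * exp (- pi * norm y ^ 2))" for t
  proof -
    have "k t = \<bar>sqrt \<alpha>\<bar> ^ DIM('a) *\<^sub>R
        (LINT y|lborel. indicator B (t + sqrt \<alpha> *\<^sub>R y) * exp (- pi * norm (t - (t + sqrt \<alpha> *\<^sub>R y)) ^ 2 / \<alpha>))"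
      unfolding k_def by (rule integral_lborel_affine) (use \<open>\<alpha> > 0\<close> in auto)
    also have "(\<lambda>y. indicator B (t + sqrt \<alpha> *\<^sub>R y) * exp (- pi * norm (t - (t + sqrt \<alpha> *\<^sub>R y)) ^ 2 / \<alpha>))
        = (\<lambda>y. indicator B (t + sqrt \<alpha> *\<^sub>R y) * exp (- pi * norm y ^ 2))"
      using \<open>\<alpha> > 0\<close> by (auto simp: power_mult_distrib)
    finally show ?thesis using \<open>\<alpha> > 0\<close> by simp
  qed
  ultimately have "complex_of_real (sqrt \<alpha> ^ DIM('a)) * (LINT t|lborel. \<psi> t * complex_of_real
      (LINT y|lborel. indicator B (t + sqrt \<alpha> *\<^sub>R y) * exp (- pi * norm y ^ 2))) = 0"
    by (subst integral_mult_right_zero[symmetric]) (simp add: mult_ac)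
  with \<open>\<alpha> > 0\<close> show ?thesis unfolding B_def by simp
qed

lemma tendsto_mollified_box_indicator:
  fixes t a b :: "'a::euclidean_space"
  assumes s: "s \<longlonglongrightarrow> 0" and t: "t \<notin> cbox a b - box a b"
  shows "(\<lambda>n. LINT y|lborel. indicator (box a b) (t + s n *\<^sub>R y) * exp (- pi * norm y ^ 2))
           \<longlonglongrightarrow> indicator (box a b) t * (LINT y|lborel. exp (- pi * norm (y::'a) ^ 2))"
proof -
  have integrable: "integrable lborel (\<lambda>y::'a. exp (- pi * norm y ^ 2))"
    using integrable_gaussian[of 1, where 'a='a] by simp
  have pointwise: "(\<lambda>n. indicator (box a b) (t + s n *\<^sub>R y) * exp (- pi * norm y ^ 2))
      \<longlonglongrightarrow> indicator (box a b) t * exp (- pi * norm y ^ 2)" for y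
  proof -
    have "(\<lambda>n. t + s n *\<^sub>R y) \<longlonglongrightarrow> t + 0 *\<^sub>R y"
      by (intro tendsto_intros s)
    then have t_lim: "(\<lambda>n. t + s n *\<^sub>R y) \<longlonglongrightarrow> t" by simp
    have "eventually (\<lambda>n. indicator (box a b) (t + s n *\<^sub>R y) = (indicator (box a b) t :: real)) sequentially"
    proof (cases "t \<in> box a b")
      case True
      have "eventually (\<lambda>n. t + s n *\<^sub>R y \<in> box a b) sequentially"
        using topological_tendstoD[OF t_lim, of "box a b"] True by auto
      then show ?thesis by eventually_elim (use True in auto)
    next
      case False
      then have "t \<in> - cbox a b" using t by auto
      then have "eventually (\<lambda>n. t + s n *\<^sub>R y \<in> - cbox a b) sequentially"
        using topological_tendstoD[OF t_lim, of "- cbox a b"] by (auto simp: open_Compl)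
      then show ?thesis
        by eventually_elim (use False box_subset_cbox in \<open>auto simp: indicator_def\<close>)
    qed
    then show ?thesis
      by (intro tendsto_eventually) (auto elim!: eventually_mono)
  qed
  have "(\<lambda>n. LINT y|lborel. indicator (box a b) (t + s n *\<^sub>R y) * exp (- pi * norm y ^ 2))
      \<longlonglongrightarrow> (LINT y|lborel. indicator (box a b) t * exp (- pi * norm (y::'a) ^ 2))"
  proof (rule integral_dominated_convergence[where w = "\<lambda>y. exp (- pi * norm y ^ 2)"])
    show "AE y in lborel. norm (indicator (box a b) (t + s n *\<^sub>R y) * exp (- pi * norm y ^ 2))
            \<le> exp (- pi * norm y ^ 2)" for n
      by (intro AE_I2) (auto simp: indicator_def)
  qed (use integrable pointwise in auto)
  then show ?thesis by simp
qed

text \<open>Mollify the indicator of a box by Gaussians of shrinking width; the mollified indicators are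
  Gaussian convolutions, and they converge to the indicator off the (null) frontier of the box.\<close>

lemma gaussian_convolution_zero_imp_box_integral_zero:
  fixes \<psi> :: "'a::euclidean_space \<Rightarrow> complex"
  assumes [measurable]: "\<psi> \<in> borel_measurable borel" and int: "integrable lborel \<psi>"
    and convolution_zero: "\<And>x \<alpha>. \<alpha> > 0 \<Longrightarrow>
           (LINT t|lborel. \<psi> t * complex_of_real (exp (- pi * norm (t - x) ^ 2 / \<alpha>))) = 0"
  shows "(LINT t|lborel. \<psi> t * indicator (box a b) t) = 0"
proof -
  define I where "I = (LINT y|lborel. exp (- pi * norm (y::'a) ^ 2))"
  have "I > 0" unfolding I_def using integral_gaussian_pos[of 1, where 'a='a] by simp
  have integrable: "integrable lborel (\<lambda>y::'a. exp (- pi * norm y ^ 2))"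
    using integrable_gaussian[of 1, where 'a='a] by simp
  define s where "s = (\<lambda>n::nat. sqrt (1 / real (Suc n)))"
  have "s \<longlonglongrightarrow> 0" unfolding s_def by real_asymp
  define m where "m = (\<lambda>n t. LINT y|lborel. indicator (box a b) (t + s n *\<^sub>R y) * exp (- pi * norm y ^ 2))"
  have norm_m: "norm (m n t) \<le> I" for n t
  proof -
    have "integrable lborel (\<lambda>y. indicator (box a b) (t + s n *\<^sub>R y) * exp (- pi * norm y ^ 2))"
      by (rule Bochner_Integration.integrable_bound[OF integrable]) (auto simp: indicator_def)
    then have "0 \<le> m n t" "m n t \<le> I" unfolding m_def I_def using integrable
      by (auto intro!: integral_nonneg_AE integral_mono simp: indicator_def)
    then show ?thesis by simp
  qed
  have "(\<lambda>n. LINT t|lborel. \<psi> t * complex_of_real (m n t))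
      \<longlonglongrightarrow> (LINT t|lborel. \<psi> t * complex_of_real (indicator (box a b) t * I))"
  proof (rule integral_dominated_convergence[where w = "\<lambda>t. norm (\<psi> t) * I"])
    show "AE t in lborel. (\<lambda>n. \<psi> t * complex_of_real (m n t)) \<longlonglongrightarrow> \<psi> t * complex_of_real (indicator (box a b) t * I)"
      using AE_lborel_not_in_box_frontier[of a b]
    proof eventually_elim
      case (elim t)
      show ?case unfolding m_def I_def
        by (intro tendsto_intros tendsto_mollified_box_indicator[OF \<open>s \<longlonglongrightarrow> 0\<close> elim])
    qed
    show "AE t in lborel. norm (\<psi> t * complex_of_real (m n t)) \<le> norm (\<psi> t) * I" for n
      using norm_m[of n] by (intro AE_I2) (auto simp: norm_mult intro!: mult_left_mono)
  qed (use int in \<open>auto simp: m_def\<close>)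
  moreover have "(LINT t|lborel. \<psi> t * complex_of_real (m n t)) = 0" for n
    unfolding m_def s_def
    by (rule gaussian_convolution_zero_imp_mollified_box_zero[OF assms(1) int convolution_zero]) auto
  ultimately have "(LINT t|lborel. \<psi> t * complex_of_real (indicator (box a b) t * I)) = 0"
    by (simp add: LIMSEQ_const_iff)
  moreover have "(\<lambda>t. \<psi> t * complex_of_real (indicator (box a b) t * I))
      = (\<lambda>t. complex_of_real I * (\<psi> t * indicator (box a b) t))"
    by (auto simp: indicator_def fun_eq_iff)
  ultimately show ?thesis using \<open>I > 0\<close> by (simp only: integral_mult_right_zero) simp
qed

lemma fourier_zero_imp_AE_zero:
  fixes \<psi> :: "'a::euclidean_space \<Rightarrow> complex"
  assumes "\<psi> \<in> borel_measurable borel" and "integrable lborel \<psi>" and "\<And>y. fourier \<psi> y = 0"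
  shows "AE t in lborel. \<psi> t = 0"
  using assms
  by (intro AE_zero_if_box_integrals_zero_complex gaussian_convolution_zero_imp_box_integral_zero
        fourier_zero_imp_gaussian_convolution_zero)

section \<open>The entire function attached to the Gaussian STFT\<close>

lemma stft_gauss_eq_lborel:
  assumes [measurable]: "f \<in> borel_measurable borel"
  shows "stft gauss f x \<omega> = (LINT t|lborel. exp (- (complex_of_real (2 * pi) * \<i> * complex_of_real (t \<bullet> \<omega>)))
                                 * f t * complex_of_real (exp (- pi * norm (t - x) ^ 2)))"
  unfolding stft_def gauss_def complex_cnj_complex_of_real
  by (rule integral_completion) measurable

lemma l2_inner_gauss_eq_lborel:
  assumes [measurable]: "f \<in> borel_measurable borel"
  shows "l2_inner f gauss = (LINT t|lborel. f t * gauss t)"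
  unfolding l2_inner_def gauss_def complex_cnj_complex_of_real
  by (rule integral_completion) measurable

lemma norm_stft_gauss_le:
  fixes f :: "'a::euclidean_space \<Rightarrow> complex"
  assumes [measurable]: "f \<in> borel_measurable borel" and sq: "integrable lborel (\<lambda>t. norm (f t) ^ 2)"
  shows "norm (stft gauss f x \<omega>) \<le> ((LINT t|lborel. norm (f t) ^ 2) + (LINT t|lborel. gaussian 2 (t::'a))) / 2"
proof -
  let ?k = "\<lambda>t. exp (- (complex_of_real (2 * pi) * \<i> * complex_of_real (t \<bullet> \<omega>))) * f t
                 * complex_of_real (exp (- pi * norm (t - x) ^ 2))"
  let ?b = "\<lambda>t. (norm (f t) ^ 2 + gaussian 2 (t - x)) / 2"
  have integrable_translate: "integrable lborel (\<lambda>t. gaussian 2 (t - x))"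
    using integrable_gaussian[of 2, where 'a='a] integrable_lborel_translate_iff[of "gaussian 2" "- x"] by simp
  have integrable_b: "integrable lborel ?b"
    using sq integrable_translate by (intro integrable_divide Bochner_Integration.integrable_add)
  have bound: "norm (?k t) \<le> ?b t" for t
  proof -
    have "norm (?k t) = norm (f t) * exp (- pi * norm (t - x) ^ 2)"
      by (simp add: norm_mult)
    also have "\<dots> \<le> (norm (f t) ^ 2 + (exp (- pi * norm (t - x) ^ 2))\<^sup>2) / 2"
      by (rule mult_le_sum_squares_half)
    also have "(exp (- pi * norm (t - x) ^ 2))\<^sup>2 = gaussian 2 (t - x)"
      by (simp add: power2_eq_square exp_add[symmetric])
    finally show ?thesis .
  qed
  have "norm (stft gauss f x \<omega>) \<le> (LINT t|lborel. norm (?k t))"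
    unfolding stft_gauss_eq_lborel[OF assms(1)] by (rule integral_norm_bound)
  also have "\<dots> \<le> (LINT t|lborel. ?b t)"
  proof (rule integral_mono[OF _ integrable_b bound])
    show "integrable lborel (\<lambda>t. norm (?k t))"
    proof (rule Bochner_Integration.integrable_bound[OF integrable_b])
      have "norm (?k t) \<le> \<bar>?b t\<bar>" for t using bound[of t] abs_ge_self[of "?b t"] by linarith
      then show "AE t in lborel. norm (norm (?k t)) \<le> norm (?b t)" by simp
    qed measurable
  qed
  also have "\<dots> = ((LINT t|lborel. norm (f t) ^ 2) + (LINT t|lborel. gaussian 2 (t - x))) / 2"
    using sq integrable_translate by simp
  also have "(LINT t|lborel. gaussian 2 (t - x)) = (LINT t|lborel. gaussian 2 (t::'a))"
    using integral_lborel_translate[of "gaussian 2" "- x"] by simp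
  finally show ?thesis .
qed

definition gauss_stft_entire :: "('a::euclidean_space \<Rightarrow> complex) \<Rightarrow> 'a \<Rightarrow> complex \<Rightarrow> complex" where
  "gauss_stft_entire f u \<zeta> = exp (- complex_of_real pi * \<zeta>\<^sup>2) * laplace_along (\<lambda>t. f t * gauss t) ((2 * pi) *\<^sub>R u) \<zeta>"

lemma holomorphic_gauss_stft_entire:
  assumes "f \<in> borel_measurable borel" and "integrable lborel (\<lambda>t. norm (f t) ^ 2)"
  shows "gauss_stft_entire f u holomorphic_on S"
proof -
  have "exp_integrable (\<lambda>t. f t * gauss t)"
    using exp_integrable_mult_gaussian[OF assms, of 1] by (simp add: gauss_def)
  then show ?thesis
    unfolding gauss_stft_entire_def[abs_def] by (intro holomorphic_intros holomorphic_laplace_along)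
qed

lemma gauss_stft_entire_kernel:
  fixes u t :: "'a::euclidean_space" and a b :: real
  assumes "norm u = 1"
  shows "exp (- complex_of_real pi * (Complex a b)\<^sup>2) * (gauss t * exp (Complex a b * complex_of_real (t \<bullet> (2 * pi) *\<^sub>R u)))
    = complex_of_real (exp (pi * b\<^sup>2)) * exp (- (\<i> * complex_of_real (2 * pi * a * b))) *
      (exp (- (complex_of_real (2 * pi) * \<i> * complex_of_real (t \<bullet> (- b) *\<^sub>R u))) * complex_of_real (exp (- pi * norm (t - a *\<^sub>R u) ^ 2)))"
proof -
  have square: "norm (t - a *\<^sub>R u) ^ 2 = norm t ^ 2 - 2 * a * (t \<bullet> u) + a\<^sup>2"
  proof -
    have "norm (t - a *\<^sub>R u) ^ 2 = (t - a *\<^sub>R u) \<bullet> (t - a *\<^sub>R u)" by (simp add: power2_norm_eq_inner)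
    also have "\<dots> = t \<bullet> t - 2 * a * (t \<bullet> u) + a\<^sup>2 * (u \<bullet> u)"
      by (simp add: inner_diff_left inner_diff_right inner_commute power2_eq_square algebra_simps)
    also have "u \<bullet> u = 1" using assms by (simp add: norm_eq_sqrt_inner)
    finally show ?thesis by (simp add: power2_norm_eq_inner)
  qed
  have "- complex_of_real pi * (Complex a b)\<^sup>2 + complex_of_real (- pi * norm t ^ 2) + Complex a b * complex_of_real (t \<bullet> (2 * pi) *\<^sub>R u)
      = complex_of_real (pi * b\<^sup>2) + - (\<i> * complex_of_real (2 * pi * a * b)) +
       - (complex_of_real (2 * pi) * \<i> * complex_of_real (t \<bullet> (- b) *\<^sub>R u)) + complex_of_real (- pi * norm (t - a *\<^sub>R u) ^ 2)"
    unfolding square inner_scaleR_right by (simp add: complex_eq_iff power2_eq_square algebra_simps)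
  moreover have "exp (- complex_of_real pi * (Complex a b)\<^sup>2) * (gauss t * exp (Complex a b * complex_of_real (t \<bullet> (2 * pi) *\<^sub>R u)))
      = exp (- complex_of_real pi * (Complex a b)\<^sup>2 + complex_of_real (- pi * norm t ^ 2) + Complex a b * complex_of_real (t \<bullet> (2 * pi) *\<^sub>R u))"
    unfolding gauss_def by (simp only: exp_add exp_of_real mult.assoc)
  moreover have "complex_of_real (exp (pi * b\<^sup>2)) * exp (- (\<i> * complex_of_real (2 * pi * a * b))) *
      (exp (- (complex_of_real (2 * pi) * \<i> * complex_of_real (t \<bullet> (- b) *\<^sub>R u))) * complex_of_real (exp (- pi * norm (t - a *\<^sub>R u) ^ 2)))
    = exp (complex_of_real (pi * b\<^sup>2) + - (\<i> * complex_of_real (2 * pi * a * b)) +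
       - (complex_of_real (2 * pi) * \<i> * complex_of_real (t \<bullet> (- b) *\<^sub>R u)) + complex_of_real (- pi * norm (t - a *\<^sub>R u) ^ 2))"
    by (simp only: exp_add exp_of_real mult.assoc)
  ultimately show ?thesis by simp
qed

lemma gauss_stft_entire_Complex:
  assumes "f \<in> borel_measurable borel" and "norm u = 1"
  shows "gauss_stft_entire f u (Complex a b)
    = complex_of_real (exp (pi * b\<^sup>2)) * exp (- (\<i> * complex_of_real (2 * pi * a * b)))
      * stft gauss f (a *\<^sub>R u) ((- b) *\<^sub>R u)"
proof -
  define K where "K = complex_of_real (exp (pi * b\<^sup>2)) * exp (- (\<i> * complex_of_real (2 * pi * a * b)))"
  define X where "X = (\<lambda>t. exp (- (complex_of_real (2 * pi) * \<i> * complex_of_real (t \<bullet> (- b) *\<^sub>R u))))"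
  define G where "G = (\<lambda>t. complex_of_real (exp (- pi * norm (t - a *\<^sub>R u) ^ 2)))"
  have pointwise: "exp (- complex_of_real pi * (Complex a b)\<^sup>2) * (f t * gauss t * exp (Complex a b * complex_of_real (t \<bullet> (2 * pi) *\<^sub>R u)))
      = K * (X t * f t * G t)" for t
  proof -
    have "exp (- complex_of_real pi * (Complex a b)\<^sup>2) * (f t * gauss t * exp (Complex a b * complex_of_real (t \<bullet> (2 * pi) *\<^sub>R u)))
        = f t * (exp (- complex_of_real pi * (Complex a b)\<^sup>2) * (gauss t * exp (Complex a b * complex_of_real (t \<bullet> (2 * pi) *\<^sub>R u))))"
      by (simp only: ac_simps)
    also have "\<dots> = f t * (K * (X t * G t))"
      unfolding gauss_stft_entire_kernel[OF assms(2)] K_def X_def G_def ..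
    finally show ?thesis by (simp only: ac_simps)
  qed
  have "gauss_stft_entire f u (Complex a b)
      = (LINT t|lborel. exp (- complex_of_real pi * (Complex a b)\<^sup>2) * (f t * gauss t * exp (Complex a b * complex_of_real (t \<bullet> (2 * pi) *\<^sub>R u))))"
    unfolding gauss_stft_entire_def laplace_along_def by (rule integral_mult_right_zero[symmetric])
  also have "\<dots> = K * (LINT t|lborel. X t * f t * G t)"
    unfolding pointwise by (rule integral_mult_right_zero)
  also have "(LINT t|lborel. X t * f t * G t) = stft gauss f (a *\<^sub>R u) ((- b) *\<^sub>R u)"
    unfolding stft_gauss_eq_lborel[OF assms(1)] X_def G_def ..
  finally show ?thesis unfolding K_def .
qed

lemma norm_gauss_stft_entire_Complex:
  assumes "f \<in> borel_measurable borel" and "norm u = 1"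
  shows "norm (gauss_stft_entire f u (Complex a b)) = exp (pi * b\<^sup>2) * norm (stft gauss f (a *\<^sub>R u) ((- b) *\<^sub>R u))"
  unfolding gauss_stft_entire_Complex[OF assms] by (simp add: norm_mult)

text \<open>On the boundary of the strip \<open>|Im \<zeta>| \<le> R\<close> the entire function is bounded by its modulus at
  \<open>0\<close>, so it attains its maximum modulus at an interior point.\<close>

lemma gauss_stft_entire_constant:
  fixes f :: "'a::euclidean_space \<Rightarrow> complex"
  assumes f: "f \<in> borel_measurable borel" and sq: "integrable lborel (\<lambda>t. norm (f t) ^ 2)"
    and "R > 0" and "N > 0" and "exp (pi * R\<^sup>2) \<le> N"
    and small: "\<And>x \<omega>. norm \<omega> = R \<Longrightarrow> norm (stft gauss f x \<omega>) \<le> norm (l2_inner f gauss) / N"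
    and u: "norm u = 1"
  shows "gauss_stft_entire f u z = l2_inner f gauss"
proof -
  define F where "F = gauss_stft_entire f u"
  define c where "c = l2_inner f gauss"
  define M where "M = ((LINT t|lborel. norm (f t) ^ 2) + (LINT t|lborel. gaussian 2 (t::'a))) / 2"
  have holo: "F holomorphic_on UNIV"
    unfolding F_def by (rule holomorphic_gauss_stft_entire[OF f sq])
  have F0: "F 0 = c"
    unfolding F_def c_def gauss_stft_entire_def laplace_along_def l2_inner_gauss_eq_lborel[OF f] by simp
  have norm_F: "norm (F z) = exp (pi * (Im z)\<^sup>2) * norm (stft gauss f (Re z *\<^sub>R u) ((- Im z) *\<^sub>R u))" for z
    using norm_gauss_stft_entire_Complex[OF f u, of "Re z" "Im z"] by (simp add: F_def)
  have bounded: "norm (F z) \<le> exp (pi * R\<^sup>2) * M" if "\<bar>Im z\<bar> \<le> R" for z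
    unfolding norm_F M_def
  proof (intro mult_mono norm_stft_gauss_le[OF f sq])
    show "exp (pi * (Im z)\<^sup>2) \<le> exp (pi * R\<^sup>2)"
      using power_mono[OF that, of 2] by simp
  qed auto
  have "exp (pi * R\<^sup>2) * (norm c / N) \<le> N * (norm c / N)"
    using \<open>exp (pi * R\<^sup>2) \<le> N\<close> \<open>N > 0\<close> by (intro mult_right_mono) auto
  also have "\<dots> = norm c" using \<open>N > 0\<close> by simp
  finally have damping: "exp (pi * R\<^sup>2) * (norm c / N) \<le> norm c" .
  have boundary: "norm (F (Complex x r)) \<le> norm c" if "\<bar>r\<bar> = R" for x r
  proof -
    have "r\<^sup>2 = R\<^sup>2" using that by (metis power2_abs)
    have "norm (stft gauss f (x *\<^sub>R u) ((- r) *\<^sub>R u)) \<le> norm c / N"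
      using small[of "(- r) *\<^sub>R u"] u that unfolding c_def by simp
    then have "exp (pi * R\<^sup>2) * norm (stft gauss f (x *\<^sub>R u) ((- r) *\<^sub>R u)) \<le> exp (pi * R\<^sup>2) * (norm c / N)"
      by (rule mult_left_mono) simp
    then have "norm (F (Complex x r)) \<le> exp (pi * R\<^sup>2) * (norm c / N)"
      unfolding norm_F using \<open>r\<^sup>2 = R\<^sup>2\<close> by simp
    with damping show ?thesis by linarith
  qed
  have le_F0: "norm (F z) \<le> norm (F 0)" if "z \<in> {z. \<bar>Im z\<bar> < R}" for z
    using strip_maximum_principle[OF holo \<open>R > 0\<close> bounded boundary boundary] that F0 \<open>R > 0\<close> by simp
  have "open {z::complex. \<bar>Im z\<bar> < R}"
    by (intro open_Collect_less continuous_intros)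
  then have "F constant_on UNIV"
    by (rule maximum_modulus_principle[OF holo open_UNIV connected_UNIV _ _ _ le_F0])
       (use \<open>R > 0\<close> in auto)
  then show ?thesis
    using F0 unfolding F_def c_def constant_on_def by (metis UNIV_I)
qed

lemma fourier_eq_of_gauss_stft_entire_constant:
  fixes f :: "'a::euclidean_space \<Rightarrow> complex"
  assumes "f \<in> borel_measurable borel"
    and const: "\<And>u z. norm u = 1 \<Longrightarrow> gauss_stft_entire f u z = c"
  shows "fourier (\<lambda>t. f t * gauss t) y = c * complex_of_real (exp (- pi * norm y ^ 2))"
proof -
  have on_lines: "fourier (\<lambda>t. f t * gauss t) (r *\<^sub>R u) = c * complex_of_real (exp (- pi * r\<^sup>2))"
    if "norm u = 1" for u r
  proof -
    have square: "(Complex 0 r)\<^sup>2 = - complex_of_real (r\<^sup>2)" by (simp add: complex_eq_iff power2_eq_square)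
    have rotate: "Complex 0 r * complex_of_real (t \<bullet> (2 * pi) *\<^sub>R u) = \<i> * complex_of_real (t \<bullet> (2 * pi) *\<^sub>R (r *\<^sub>R u))"
      for t by (simp add: complex_eq_iff)
    have "c = gauss_stft_entire f u (Complex 0 r)" using const[OF that] by simp
    also have "\<dots> = exp (complex_of_real (pi * r\<^sup>2)) * fourier (\<lambda>t. f t * gauss t) (r *\<^sub>R u)"
      unfolding gauss_stft_entire_def laplace_along_def fourier_def square rotate by simp
    finally have "c = exp (complex_of_real (pi * r\<^sup>2)) * fourier (\<lambda>t. f t * gauss t) (r *\<^sub>R u)" .
    then show ?thesis
      by (simp add: exp_minus field_simps flip: exp_of_real)
  qed
  obtain u0 :: 'a where u0: "norm u0 = 1" using norm_Basis[OF SOME_Basis] by blast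
  show ?thesis
  proof (cases "y = 0")
    case True
    then show ?thesis using on_lines[OF u0, of 0] by simp
  next
    case False
    then have "norm (y /\<^sub>R norm y) = 1" and "norm y *\<^sub>R (y /\<^sub>R norm y) = y" by simp_all
    then show ?thesis using on_lines[of "y /\<^sub>R norm y" "norm y"] by (simp add: power2_eq_square)
  qed
qed

lemma fourier_eq_gaussian_imp_AE_eq:
  fixes \<phi> :: "'a::euclidean_space \<Rightarrow> complex"
  assumes "exp_integrable \<phi>"
    and fourier_\<phi>: "\<And>y. fourier \<phi> y = c * complex_of_real (exp (- pi * norm y ^ 2))"
  shows "AE t in lborel. \<phi> t = c / (LINT t|lborel. gaussian 1 (t::'a)) * gauss t"
proof -
  define I where "I = (LINT t|lborel. gaussian 1 (t::'a))"
  have "I > 0" unfolding I_def by (rule integral_gaussian_pos) simp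
  define \<psi> where "\<psi> = (\<lambda>t. \<phi> t - c / I * gauss t)"
  have gauss_eq: "gauss = (\<lambda>t::'a. complex_of_real (gaussian 1 t))"
    by (simp add: gauss_def fun_eq_iff)
  have exp_integrable_gauss: "exp_integrable (gauss :: 'a \<Rightarrow> complex)"
    unfolding gauss_eq by (rule exp_integrable_gaussian) simp
  have fourier_gauss: "fourier gauss (y::'a) = complex_of_real I * complex_of_real (exp (- pi * norm y ^ 2))" for y
    using fourier_gaussian[of 1 y] unfolding gauss_eq I_def by simp
  have integrable: "integrable lborel (\<lambda>t. \<phi> t * exp (z * complex_of_real (t \<bullet> v)))"
    "integrable lborel (\<lambda>t::'a. gauss t * exp (z * complex_of_real (t \<bullet> v)))" for z v
    using assms(1) exp_integrable_gauss by (auto intro: exp_integrable_laplace_integrable)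
  have "AE t in lborel. \<psi> t = 0"
  proof (rule fourier_zero_imp_AE_zero)
    show "\<psi> \<in> borel_measurable borel"
      using exp_integrable_measurable[OF assms(1)] unfolding \<psi>_def gauss_def by measurable
    show "integrable lborel \<psi>"
      using integrable[of 0] unfolding \<psi>_def by simp
    show "fourier \<psi> y = 0" for y
    proof -
      let ?e = "\<lambda>t. exp (\<i> * complex_of_real (t \<bullet> (2 * pi) *\<^sub>R y))"
      have "fourier \<psi> y = (LINT t|lborel. \<phi> t * ?e t - c / I * (gauss t * ?e t))"
        unfolding fourier_def laplace_along_def \<psi>_def by (simp add: algebra_simps)
      also have "\<dots> = fourier \<phi> y - c / I * fourier gauss y"
        unfolding fourier_def laplace_along_def
        by (subst Bochner_Integration.integral_diff)
           (auto intro: integrable integrable_mult_right simp only: integral_mult_right_zero)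
      finally have "fourier \<psi> y = fourier \<phi> y - c / I * fourier gauss y" .
      then show ?thesis using \<open>I > 0\<close> by (simp add: fourier_\<phi> fourier_gauss)
    qed
  qed
  then show ?thesis by (simp add: \<psi>_def I_def)
qed

lemma gauss_stft_concentration_bound:
  fixes f :: "'a::euclidean_space \<Rightarrow> complex" and R N :: real
  assumes f: "f \<in> borel_measurable borel" and sq: "integrable lborel (\<lambda>t. norm (f t) ^ 2)"
    and nonzero: "\<not> (AE t in lborel. f t = 0)" and "R > 0" and "N > 1"
    and small: "\<And>x \<omega>. norm \<omega> = R \<Longrightarrow> norm (stft gauss f x \<omega>) \<le> norm (l2_inner f gauss) / N"
  shows "N < exp (pi * R\<^sup>2)"
proof (rule ccontr)
  assume "\<not> N < exp (pi * R\<^sup>2)"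
  define c where "c = l2_inner f gauss"
  define I where "I = (LINT t|lborel. gaussian 1 (t::'a))"
  have "gauss_stft_entire f u z = c" if "norm u = 1" for u z
    unfolding c_def
    by (rule gauss_stft_entire_constant[OF f sq \<open>R > 0\<close> _ _ small that])
       (use \<open>N > 1\<close> \<open>\<not> N < exp (pi * R\<^sup>2)\<close> in auto)
  then have "fourier (\<lambda>t. f t * gauss t) y = c * complex_of_real (exp (- pi * norm y ^ 2))" for y
    by (rule fourier_eq_of_gauss_stft_entire_constant[OF f])
  moreover have "exp_integrable (\<lambda>t. f t * gauss t)"
    using exp_integrable_mult_gaussian[OF f sq, of 1] by (simp add: gauss_def)
  ultimately have "AE t in lborel. f t * gauss t = c / I * gauss t"
    unfolding I_def by (intro fourier_eq_gaussian_imp_AE_eq)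
  then have const: "AE t in lborel. f t = c / I"
  proof eventually_elim
    case (elim t)
    then have "f t * gauss t - c / I * gauss t = 0" by simp
    then have "(f t - c / I) * gauss t = 0" by (simp only: left_diff_distrib)
    then show ?case by (simp add: gauss_def)
  qed
  have "integrable lborel (\<lambda>_::'a. norm (c / I) ^ 2)"
    by (rule integrable_cong_AE_imp[OF sq]) (use const in \<open>auto elim!: AE_mp\<close>)
  then have "norm (c / I) ^ 2 = 0" by (rule integrable_lborel_const_imp_zero)
  then have "c / I = 0" by simp
  with const have "AE t in lborel. f t = 0" by simp
  with nonzero show False by simp
qed

lemma square_integrable_AE_eq_borel:
  fixes f :: "'a::euclidean_space \<Rightarrow> complex"
  assumes "square_integrable f"
  obtains g where "g \<in> borel_measurable borel" "AE t in lebesgue. f t = g t"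
    "integrable lborel (\<lambda>t. norm (g t) ^ 2)"
proof -
  have [measurable]: "f \<in> borel_measurable lebesgue"
    and integrable_f: "integrable lebesgue (\<lambda>t. (norm (f t))\<^sup>2)"
    using assms unfolding square_integrable_def by auto
  have "(\<lambda>t. Re (f t)) \<in> borel_measurable (completion lborel)" by measurable
  then obtain r where r: "r \<in> borel_measurable lborel" "AE t in lborel. Re (f t) = r t"
    using completion_ex_borel_measurable_real by blast
  have "(\<lambda>t. Im (f t)) \<in> borel_measurable (completion lborel)" by measurable
  then obtain i where i: "i \<in> borel_measurable lborel" "AE t in lborel. Im (f t) = i t"
    using completion_ex_borel_measurable_real by blast
  define g where "g = (\<lambda>t. Complex (r t) (i t))"
  have g_meas [measurable]: "g \<in> borel_measurable borel"
    using r(1) i(1) by (simp add: g_def measurable_lborel1 borel_measurable_complex_iff)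
  have [measurable]: "g \<in> borel_measurable lebesgue"
    using g_meas by (simp add: measurable_completion)
  have "AE t in lborel. f t = g t"
    using r(2) i(2) by eventually_elim (simp add: g_def complex_eq_iff)
  then have ae: "AE t in lebesgue. f t = g t" by (rule AE_completion)
  have "integrable lebesgue (\<lambda>t. norm (g t) ^ 2)"
    by (rule integrable_cong_AE_imp[OF integrable_f]) (use ae in \<open>auto elim!: AE_mp\<close>)
  then have "integrable lborel (\<lambda>t. norm (g t) ^ 2)"
    by (subst integrable_completion[symmetric]) auto
  with g_meas ae show ?thesis by (rule that)
qed


lemma borel_measurable_cnj [measurable]: "cnj \<in> borel_measurable borel"
  by (rule borel_measurable_continuous_onI) (intro continuous_intros)

lemma borel_measurable_lebesgue_mult:
  fixes f k :: "'a::euclidean_space \<Rightarrow> complex"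
  assumes "f \<in> borel_measurable lebesgue" and "k \<in> borel_measurable borel"
  shows "(\<lambda>t. f t * k t) \<in> borel_measurable lebesgue"
  using assms(1) measurable_completion[of k lborel borel] assms(2)
  by (intro borel_measurable_times) (simp_all add: measurable_lborel1)

lemma stft_cong_AE:
  fixes f g w :: "'a::euclidean_space \<Rightarrow> complex"
  assumes "f \<in> borel_measurable lebesgue" "g \<in> borel_measurable lebesgue"
    and [measurable]: "w \<in> borel_measurable borel" and "AE t in lebesgue. f t = g t"
  shows "stft w f x \<omega> = stft w g x \<omega>"
proof -
  define k where "k = (\<lambda>t. exp (- (2 * pi * \<i> * complex_of_real (t \<bullet> \<omega>))) * cnj (w (t - x)))"
  have "k \<in> borel_measurable borel" unfolding k_def by measurable
  then have "(\<lambda>t. f t * k t) \<in> borel_measurable lebesgue" "(\<lambda>t. g t * k t) \<in> borel_measurable lebesgue"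
    using assms(1,2) by (simp_all add: borel_measurable_lebesgue_mult)
  moreover have "AE t in lebesgue. f t * k t = g t * k t"
    using assms(4) by eventually_elim simp
  ultimately have "(LINT t|lebesgue. f t * k t) = (LINT t|lebesgue. g t * k t)"
    by (rule integral_cong_AE)
  then show ?thesis by (simp add: stft_def k_def mult_ac)
qed

lemma l2_inner_cong_AE:
  fixes f g w :: "'a::euclidean_space \<Rightarrow> complex"
  assumes "f \<in> borel_measurable lebesgue" "g \<in> borel_measurable lebesgue"
    and [measurable]: "w \<in> borel_measurable borel" and "AE t in lebesgue. f t = g t"
  shows "l2_inner f w = l2_inner g w"
proof -
  have "(\<lambda>t. cnj (w t)) \<in> borel_measurable borel" by measurable
  then have "(\<lambda>t. f t * cnj (w t)) \<in> borel_measurable lebesgue" "(\<lambda>t. g t * cnj (w t)) \<in> borel_measurable lebesgue"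
    using assms(1,2) by (simp_all add: borel_measurable_lebesgue_mult)
  moreover have "AE t in lebesgue. f t * cnj (w t) = g t * cnj (w t)"
    using assms(4) by eventually_elim simp
  ultimately show ?thesis unfolding l2_inner_def by (rule integral_cong_AE)
qed

lemma sqrt_ln_div_pi_less:
  assumes "N > 0" and "R > 0" and "N < exp (pi * R\<^sup>2)"
  shows "sqrt (ln N / pi) < R"
proof -
  have "ln N < ln (exp (pi * R\<^sup>2))"
    using assms by (subst ln_less_cancel_iff) auto
  then have "ln N / pi < R\<^sup>2" by (simp add: divide_less_eq mult.commute)
  then show ?thesis using \<open>R > 0\<close> real_sqrt_less_mono[of "ln N / pi" "R\<^sup>2"] by simp
qed

theorem theorem1:
  fixes f :: "'a::euclidean_space \<Rightarrow> complex" and R N :: real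
  assumes "R > 0" and "N > 1"
    and "square_integrable f"
    and "\<not> (AE t in lebesgue. f t = 0)"
    and "\<And>x \<omega>. norm \<omega> = R \<Longrightarrow> norm (stft gauss f x \<omega>) \<le> norm (l2_inner f gauss) / N"
  shows "R > sqrt (ln N / pi)"
proof -
  obtain g where g [measurable]: "g \<in> borel_measurable borel" and ae: "AE t in lebesgue. f t = g t"
    and sq: "integrable lborel (\<lambda>t. norm (g t) ^ 2)"
    using square_integrable_AE_eq_borel[OF assms(3)] by blast
  have [measurable]: "f \<in> borel_measurable lebesgue" "gauss \<in> borel_measurable borel"
    using assms(3) unfolding square_integrable_def gauss_def by auto
  have "g \<in> borel_measurable lebesgue" by (rule measurable_completion) (simp add: measurable_lborel1)
  then have same: "stft gauss f x \<omega> = stft gauss g x \<omega>" "l2_inner f gauss = l2_inner g gauss" for x \<omega>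
    using ae by (auto intro: stft_cong_AE l2_inner_cong_AE)
  have "\<not> (AE t in lborel. g t = 0)"
  proof
    assume "AE t in lborel. g t = 0"
    then have "AE t in lebesgue. g t = 0" by (rule AE_completion)
    with ae have "AE t in lebesgue. f t = 0" by eventually_elim simp
    with assms(4) show False by simp
  qed
  then have "N < exp (pi * R\<^sup>2)"
    using assms by (intro gauss_stft_concentration_bound[OF g sq]) (simp_all add: same)
  then show ?thesis using assms(1,2) by (intro sqrt_ln_div_pi_less) simp_all
qed

end
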